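(* Let $S,B\subseteq\{-1,1,*\}^X$ be binary hypothesis classes. For any $\varepsilon\ge0$ and $n\in\mathbb{Z}_{>0}$, $\mathsf{CompOL}_n(S,B,\varepsilon)\subseteq\mathsf{ReaOL}_n(\mathbf{A}_{S,B},\varepsilon)$; that is, any online learner solving comparative online learning for $(S,B)$ also solves realizable online learning for $\mathbf{A}_{S,B}$ with the same $\varepsilon$.
   Context: Agreement hypotheses: for $s,b:X\to\{-1,1,*\}$, $\mathbf{a}_{s,b}(x)=s(x)$ if $s(x)=b(x)\in\{-1,1\}$, and $*$ otherwise; $\mathbf{A}_{S,B}=\{\mathbf{a}_{s,b}:s\in S,b\in B\}$. An online learner, for each $i=1,\dots,n$, given $(x_1,y_1),\dots,(x_{i-1},y_{i-1})$ and $x_i$, outputs a possibly random $\hat y_i\in\{-1,1\}$; $\mathsf{mistake}(L;(x_i,y_i)_{i=1}^n)=\frac1n\sum_i\Pr[\hat y_i\neq y_i]$ and $\mathsf{mistake}(h;(x_i,y_i)_{i=1}^n)=\frac1n\sum_i\mathbf{1}(h(x_i)\ne y_i)$. $\mathsf{ReaOL}_n(H,\varepsilon)$: online learners with $\mathsf{mistake}(L;\cdot)\le\varepsilon$ on every sequence with $y_i=h(x_i)$ for all $i$ for some $h\in H$. $\mathsf{CompOL}_n(S,B,\varepsilon)$: online learners with $\mathsf{mistake}(L;\cdot)\le\inf_{b\in B}\mathsf{mistake}(b;\cdot)+\varepsilon$ on every sequence with $y_i=s(x_i)$ for all $i$ for some $s\in S$. *)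

theory Defs
  imports "HOL-Probability.Probability"
begin

datatype pm = Neg | Pos | Star

text \<open>Actual labels of examples and learner predictions live in {-1,1}, encoded as bool
  (True = 1, False = -1).\<close>
definition lab :: "bool \<Rightarrow> pm" where
  "lab b = (if b then Pos else Neg)"

definition agree_hyp :: "('x \<Rightarrow> pm) \<Rightarrow> ('x \<Rightarrow> pm) \<Rightarrow> 'x \<Rightarrow> pm" where
  "agree_hyp s b x = (if s x = b x \<and> s x \<noteq> Star then s x else Star)"

definition agree_class :: "('x \<Rightarrow> pm) set \<Rightarrow> ('x \<Rightarrow> pm) set \<Rightarrow> ('x \<Rightarrow> pm) set" where
  "agree_class S B = {agree_hyp s b | s b. s \<in> S \<and> b \<in> B}"

type_synonym 'x learner = "('x \<times> bool) list \<Rightarrow> 'x \<Rightarrow> bool pmf"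

definition mistake_learner :: "'x learner \<Rightarrow> ('x \<times> bool) list \<Rightarrow> real" where
  "mistake_learner L seq =
     (\<Sum>i<length seq. measure_pmf.prob (L (take i seq) (fst (seq ! i))) {z. z \<noteq> snd (seq ! i)})
       / real (length seq)"

definition mistake_hyp :: "('x \<Rightarrow> pm) \<Rightarrow> ('x \<times> bool) list \<Rightarrow> real" where
  "mistake_hyp h seq =
     (\<Sum>i<length seq. if h (fst (seq ! i)) \<noteq> lab (snd (seq ! i)) then 1 else 0) / real (length seq)"

definition realized_by :: "('x \<Rightarrow> pm) \<Rightarrow> ('x \<times> bool) list \<Rightarrow> bool" where
  "realized_by h seq = (\<forall>i<length seq. lab (snd (seq ! i)) = h (fst (seq ! i)))"

definition ReaOL :: "nat \<Rightarrow> ('x \<Rightarrow> pm) set \<Rightarrow> real \<Rightarrow> 'x learner set" where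
  "ReaOL n H \<epsilon> = {L. \<forall>seq. length seq = n \<and> (\<exists>h\<in>H. realized_by h seq)
                          \<longrightarrow> mistake_learner L seq \<le> \<epsilon>}"

definition CompOL :: "nat \<Rightarrow> ('x \<Rightarrow> pm) set \<Rightarrow> ('x \<Rightarrow> pm) set \<Rightarrow> real \<Rightarrow> 'x learner set" where
  "CompOL n S B \<epsilon> = {L. \<forall>seq. length seq = n \<and> (\<exists>s\<in>S. realized_by s seq)
                          \<longrightarrow> mistake_learner L seq \<le> (INF b\<in>B. mistake_hyp b seq) + \<epsilon>}"

end

theory Submission
  imports Defs
begin

text \<open>A sequence realized by the agreement hypothesis of s and b is realized by both s and b,
  since an actual label is never \<open>Star\<close>. Then b makes no mistakes, the infimum over B vanishes,
  and the comparative guarantee of the learner becomes the realizable one.\<close>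

lemma agree_hyp_eq_lab_iff:
  "agree_hyp s b x = lab y \<longleftrightarrow> s x = lab y \<and> b x = lab y"
  by (auto simp: agree_hyp_def lab_def)

lemma realized_by_agree_hyp_iff:
  "realized_by (agree_hyp s b) seq \<longleftrightarrow> realized_by s seq \<and> realized_by b seq"
  by (auto simp: realized_by_def eq_commute[of "lab _"] agree_hyp_eq_lab_iff)

lemma mistake_hyp_nonneg: "mistake_hyp h seq \<ge> 0"
  unfolding mistake_hyp_def by (intro divide_nonneg_nonneg sum_nonneg) auto

lemma mistake_hyp_eq_0_if_realized:
  assumes "realized_by h seq"
  shows "mistake_hyp h seq = 0"
  using assms unfolding mistake_hyp_def realized_by_def by simp

lemma INF_mistake_hyp_eq_0_if_realized:
  assumes "b \<in> B" and "realized_by b seq"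
  shows "(INF b\<in>B. mistake_hyp b seq) = 0"
proof (rule antisym)
  have "bdd_below ((\<lambda>b. mistake_hyp b seq) ` B)"
    by (auto intro: bdd_belowI[where m = 0] mistake_hyp_nonneg)
  then show "(INF b\<in>B. mistake_hyp b seq) \<le> 0"
    using cINF_lower[OF _ assms(1)] mistake_hyp_eq_0_if_realized[OF assms(2)] by metis
next
  show "0 \<le> (INF b\<in>B. mistake_hyp b seq)"
    using assms(1) by (auto intro: cINF_greatest mistake_hyp_nonneg)
qed

theorem lemma8p9:
  fixes S B :: "('x \<Rightarrow> pm) set" and \<epsilon> :: real and n :: nat
  assumes "\<epsilon> \<ge> 0" and "n > 0"
  shows "CompOL n S B \<epsilon> \<subseteq> ReaOL n (agree_class S B) \<epsilon>"
proof
  fix L assume L: "L \<in> CompOL n S B \<epsilon>"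
  show "L \<in> ReaOL n (agree_class S B) \<epsilon>"
    unfolding ReaOL_def
  proof (intro CollectI allI impI)
    fix seq :: "('x \<times> bool) list"
    assume seq: "length seq = n \<and> (\<exists>h\<in>agree_class S B. realized_by h seq)"
    then obtain s b where "s \<in> S" "b \<in> B" "realized_by s seq" "realized_by b seq"
      by (auto simp: agree_class_def realized_by_agree_hyp_iff)
    then have "mistake_learner L seq \<le> (INF b\<in>B. mistake_hyp b seq) + \<epsilon>"
      using L seq unfolding CompOL_def by blast
    also have "(INF b\<in>B. mistake_hyp b seq) = 0"
      using \<open>b \<in> B\<close> \<open>realized_by b seq\<close> by (rule INF_mistake_hyp_eq_0_if_realized)
    finally show "mistake_learner L seq \<le> \<epsilon>" by simp
  qed
qed

end
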